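(* Let $X=X_1\times\cdots\times X_r$ with $X_i$ smooth algebraic $k$-varieties, and $a(\mathbf T)=\sum_{\mathbf n\in\mathbb N^r}a_{\mathbf n}\mathbf T^{\mathbf n}\in\overline{\mathscr M}_X^{\hat\mu}[[\mathbf T]]$, $\mathbf T=(T_1,\dots,T_r)$. If $a(\mathbf T)$ is integrable, then for every ordered cell $\Delta\subset\mathbb N^r$ the series $a_\Delta(\mathbf T):=\sum_{\mathbf n\in\Delta}a_{\mathbf n}\mathbf T^{\mathbf n}$ is integrable.
   Context: $k$ is a field of characteristic zero; $\overline{\mathscr M}_X^{\hat\mu}$ is the monodromic Grothendieck ring of $X$-varieties with good $\hat\mu$-action, localized at $\mathbb L$ and at the elements $1-\mathbb L^n$ ($n\ge1$). A series is integrable if it lies in $\overline{\mathscr M}_X^{\hat\mu}[\mathbf T][(1-\mathbb L^m\mathbf T^{\mathbf n})^{-1}]_{m<0,\ \mathbf n\in\mathbb N^r\setminus\{0\}}\subset\overline{\mathscr M}_X^{\hat\mu}[[\mathbf T]]$. For integers $0=r_0<r_1<\cdots<r_s=r$, the basic ordered cell $\Delta_{(r_0,\dots,r_s)}$ is the set of $\mathbf n\in\mathbb N^r$ with $n_{r_{j-1}+1}=\cdots=n_{r_j}$ for each $j$ and $n_{r_{j-1}}<n_{r_j}$ for $2\le j\le s$. An ordered cell is the image of a basic ordered cell under a coordinate permutation $(n_1,\dots,n_r)\mapsto(n_{\rho(1)},\dots,n_{\rho(r)})$. *)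

theory Defs
  imports Main "HOL-Combinatorics.Permutations"
begin

text \<open>Multivariate formal power series in r variables T_1..T_r (0-based indices 0..r-1)
  with coefficients in a commutative ring 'a: functions from exponent vectors
  (nat => nat, vanishing outside {0..<r}) to 'a.\<close>

definition expvecs :: "nat \<Rightarrow> (nat \<Rightarrow> nat) set" where
  "expvecs r = {n. \<forall>i\<ge>r. n i = 0}"

definition is_series :: "nat \<Rightarrow> ((nat \<Rightarrow> nat) \<Rightarrow> 'a::zero) \<Rightarrow> bool" where
  "is_series r a \<longleftrightarrow> (\<forall>n. n \<notin> expvecs r \<longrightarrow> a n = 0)"

definition ps_times :: "nat \<Rightarrow> ((nat \<Rightarrow> nat) \<Rightarrow> 'a::comm_ring_1) \<Rightarrow> ((nat \<Rightarrow> nat) \<Rightarrow> 'a)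
    \<Rightarrow> ((nat \<Rightarrow> nat) \<Rightarrow> 'a)" where
  "ps_times r a b = (\<lambda>n. if n \<in> expvecs r then
       (\<Sum>p\<in>{p\<in>expvecs r. \<forall>i. p i \<le> n i}. a p * b (\<lambda>i. n i - p i)) else 0)"

definition ps_one :: "(nat \<Rightarrow> nat) \<Rightarrow> 'a::comm_ring_1" where
  "ps_one = (\<lambda>n. if n = (\<lambda>_. 0) then 1 else 0)"

definition int_pow :: "'a::comm_ring_1 \<Rightarrow> int \<Rightarrow> 'a" where
  "int_pow L m = (if 0 \<le> m then L ^ nat m else (SOME y. L * y = 1) ^ nat (- m))"

definition denom_factor :: "'a::comm_ring_1 \<Rightarrow> int \<Rightarrow> (nat \<Rightarrow> nat) \<Rightarrow> ((nat \<Rightarrow> nat) \<Rightarrow> 'a)" where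
  "denom_factor L m v = (\<lambda>n. ps_one n - (if n = v then int_pow L m else 0))"

definition denom_prod :: "nat \<Rightarrow> 'a::comm_ring_1 \<Rightarrow> (int \<times> (nat \<Rightarrow> nat)) list
    \<Rightarrow> ((nat \<Rightarrow> nat) \<Rightarrow> 'a)" where
  "denom_prod r L ps = foldr (\<lambda>(m, v) acc. ps_times r (denom_factor L m v) acc) ps ps_one"

text \<open>Integrable: lies in the subring A[T][(1 - L^m T^v)^{-1}]_{m<0, v in N^r - 0} of A[[T]],
  i.e. a = P / prod_j (1 - L^{m_j} T^{v_j}) with P a polynomial.\<close>
definition integrable :: "nat \<Rightarrow> 'a::comm_ring_1 \<Rightarrow> ((nat \<Rightarrow> nat) \<Rightarrow> 'a) \<Rightarrow> bool" where
  "integrable r L a \<longleftrightarrow>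
     (\<exists>P ps. is_series r P \<and> finite {n. P n \<noteq> 0} \<and>
        (\<forall>(m, v)\<in>set ps. m < 0 \<and> v \<in> expvecs r \<and> v \<noteq> (\<lambda>_. 0)) \<and>
        ps_times r a (denom_prod r L ps) = P)"

text \<open>Basic ordered cells. The list rs = [r_0, ..., r_s] with 0 = r_0 < ... < r_s = r.
  1-based coordinate n_i is stored at index i - 1.\<close>
definition valid_breaks :: "nat \<Rightarrow> nat list \<Rightarrow> bool" where
  "valid_breaks r rs \<longleftrightarrow> rs \<noteq> [] \<and> hd rs = 0 \<and> last rs = r \<and> sorted_wrt (<) rs"

definition basic_cell :: "nat \<Rightarrow> nat list \<Rightarrow> (nat \<Rightarrow> nat) set" where
  "basic_cell r rs = {n \<in> expvecs r.
     (\<forall>j. 1 \<le> j \<and> j < length rs \<longrightarrow>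
        (\<forall>i. rs ! (j - 1) < i \<and> i \<le> rs ! j \<longrightarrow> n (i - 1) = n (rs ! j - 1))) \<and>
     (\<forall>j. 2 \<le> j \<and> j < length rs \<longrightarrow> n (rs ! (j - 1) - 1) < n (rs ! j - 1))}"

definition ordered_cell :: "nat \<Rightarrow> (nat \<Rightarrow> nat) set \<Rightarrow> bool" where
  "ordered_cell r D \<longleftrightarrow> (\<exists>\<rho> rs. \<rho> permutes {..<r} \<and> valid_breaks r rs \<and>
      D = (\<lambda>n. n \<circ> \<rho>) ` basic_cell r rs)"

definition restrict_series :: "(nat \<Rightarrow> nat) set \<Rightarrow> ((nat \<Rightarrow> nat) \<Rightarrow> 'a::zero) \<Rightarrow> ((nat \<Rightarrow> nat) \<Rightarrow> 'a)" where
  "restrict_series D a = (\<lambda>n. if n \<in> D then a n else 0)"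

end

theory Submission
  imports Defs "HOL-Library.Function_Algebras"
begin

text \<open>
  A series is integrable iff it is a polynomial times a product of geometric series
  \<open>1/(1 - L\<^sup>m T\<^sup>v)\<close> with \<open>m < 0\<close>. An ordered cell is cut out, up to a coordinate permutation, by finitely
  many equalities and strict inequalities between coordinates, and integrable series are closed
  under differences, so it suffices to restrict to a half-space \<open>n\<^sub>x \<le> n\<^sub>y\<close>.
  For a monomial times a product of geometric series, induct on the number of factors
  \<open>1/(1 - c T\<^sup>v)\<close> whose exponent \<open>v\<close> has \<open>v\<^sub>y - v\<^sub>x \<noteq> 0\<close>. If all these differences have
  the same sign, expand one such factor into a finite geometric sum plus a tail that lies
  entirely inside or entirely outside the half-space. If there are factors of both signs, with
  \<open>v\<^sub>y - v\<^sub>x = p > 0\<close> and \<open>w\<^sub>y - w\<^sub>x = -q < 0\<close>, pass to \<open>X = (c T\<^sup>v)\<^sup>q\<close>, \<open>Y = (d T\<^sup>w)\<^sup>p\<close> and use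
  \<open>1/((1-X)(1-Y)) = 1/((1-XY)(1-X)) + Y/((1-XY)(1-Y))\<close>, where \<open>XY\<close> is balanced.
\<close>

lemma fun_diff_eq_iff:
  assumes "v \<le> n" shows "n - v = w \<longleftrightarrow> n = v + (w :: 'a \<Rightarrow> nat)"
proof -
  have "n x - v x = w x \<longleftrightarrow> n x = v x + w x" for x
    using assms by (simp add: le_fun_def) (metis add_diff_cancel_left' le_add_diff_inverse)
  then show ?thesis by (simp add: fun_eq_iff)
qed

lemma fun_add_diff_cancel [simp]: "p \<le> n \<Longrightarrow> p + (n - p) = (n :: 'a \<Rightarrow> nat)"
  by (simp add: le_fun_def fun_eq_iff)

lemma fun_diff_diff_cancel [simp]: "p \<le> n \<Longrightarrow> n - (n - p) = (p :: 'a \<Rightarrow> nat)"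
  by (simp add: le_fun_def fun_eq_iff)

lemma fun_diff_diff_eq_diff [simp]: "q \<le> p \<Longrightarrow> n - q - (p - q) = n - (p :: 'a \<Rightarrow> nat)"
  by (simp add: le_fun_def fun_eq_iff)

lemma fun_diff_le [simp]: "n - p \<le> (n :: 'a \<Rightarrow> nat)"
  by (simp add: le_fun_def)

lemma fun_le_add_self [simp]: "p \<le> p + (q :: 'a \<Rightarrow> nat)"
  by (simp add: le_fun_def)

lemma fun_diff_mono: "p \<le> n \<Longrightarrow> p - q \<le> n - (q :: 'a \<Rightarrow> nat)"
  by (simp add: le_fun_def diff_le_mono)

lemma fun_add_le_iff_le_diff:
  assumes "q \<le> n" shows "q + t \<le> n \<longleftrightarrow> t \<le> n - (q :: 'a \<Rightarrow> nat)"
proof -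
  have "\<forall>x. q x + t x \<le> n x \<longleftrightarrow> t x \<le> n x - q x"
    using assms by (simp add: le_fun_def le_diff_conv2 add.commute)
  then show ?thesis by (simp add: le_fun_def)
qed

definition fin_supp :: "(nat \<Rightarrow> nat) \<Rightarrow> bool" where
  "fin_supp n \<longleftrightarrow> finite {i. n i \<noteq> 0}"

lemma fin_supp_0 [simp]: "fin_supp 0"
  by (simp add: fin_supp_def)

lemma fin_supp_le: "fin_supp n \<Longrightarrow> p \<le> n \<Longrightarrow> fin_supp p"
  unfolding fin_supp_def le_fun_def
  by (erule finite_subset[rotated]) (metis (mono_tags) le_zero_eq mem_Collect_eq subsetI)

lemma fin_supp_add [simp]: "fin_supp (p + q) \<longleftrightarrow> fin_supp p \<and> fin_supp q"
proof -
  have "{i. (p + q) i \<noteq> 0} = {i. p i \<noteq> 0} \<union> {i. q i \<noteq> 0}" by auto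
  then show ?thesis by (simp add: fin_supp_def)
qed

lemma fin_supp_diff: "fin_supp n \<Longrightarrow> fin_supp (n - p)"
  by (rule fin_supp_le) (auto simp: le_fun_def)

lemma finite_atMost_fin_supp:
  assumes "fin_supp n" shows "finite {..n}"
proof -
  let ?S = "{i. n i \<noteq> 0}"
  have "{..n} \<subseteq> {f. \<forall>i. (i \<in> ?S \<longrightarrow> f i \<in> {..Max (n ` ?S)}) \<and> (i \<notin> ?S \<longrightarrow> f i = 0)}"
  proof (intro subsetI CollectI allI conjI impI)
    fix p i assume "p \<in> {..n}"
    then have le: "p i \<le> n i" by (simp add: le_fun_def)
    show "p i \<in> {..Max (n ` ?S)}" if "i \<in> ?S"
    proof -
      have "n i \<le> Max (n ` ?S)"
        using assms that by (intro Max_ge) (simp_all add: fin_supp_def)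
      then show ?thesis using le by simp
    qed
    show "p i = 0" if "i \<notin> ?S" using le that by simp
  qed
  moreover have "finite {f. \<forall>i. (i \<in> ?S \<longrightarrow> f i \<in> {..Max (n ` ?S)}) \<and> (i \<notin> ?S \<longrightarrow> f i = 0)}"
    using assms by (intro finite_set_of_finite_funs) (auto simp: fin_supp_def)
  ultimately show ?thesis by (rule finite_subset)
qed

lemma expvecs_fin_supp: "n \<in> expvecs r \<Longrightarrow> fin_supp n"
  unfolding expvecs_def fin_supp_def
  by (rule finite_subset[of _ "{..<r}"]) (use not_less in blast)+

definition scale :: "nat \<Rightarrow> (nat \<Rightarrow> nat) \<Rightarrow> nat \<Rightarrow> nat" (infixr "*\<^sub>s" 75) where
  "k *\<^sub>s v = (\<lambda>i. k * v i)"

lemma scale_apply: "(k *\<^sub>s v) i = k * v i"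
  by (simp add: scale_def)

lemma scale_0 [simp]: "0 *\<^sub>s v = 0"
  by (simp add: fun_eq_iff scale_apply)

lemma scale_Suc: "Suc k *\<^sub>s v = v + k *\<^sub>s v"
  by (simp add: fun_eq_iff scale_apply)

lemma scale_eq_scale_iff:
  assumes "v \<noteq> 0" shows "k *\<^sub>s v = l *\<^sub>s v \<longleftrightarrow> k = l"
proof
  assume eq: "k *\<^sub>s v = l *\<^sub>s v"
  obtain i where "v i \<noteq> 0" using assms by (auto simp: fun_eq_iff)
  moreover have "k * v i = l * v i" using fun_cong[OF eq, of i] by (simp add: scale_apply)
  ultimately show "k = l" by simp
qed simp

lemma fin_supp_scale: "fin_supp v \<Longrightarrow> fin_supp (k *\<^sub>s v)"
  unfolding fin_supp_def by (erule finite_subset[rotated]) (auto simp: scale_apply)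

lemma zero_in_expvecs [simp]: "0 \<in> expvecs r"
  by (simp add: expvecs_def)

lemma add_in_expvecs_iff [simp]: "u + w \<in> expvecs r \<longleftrightarrow> u \<in> expvecs r \<and> w \<in> expvecs r"
  by (auto simp: expvecs_def)

lemma scale_in_expvecs: "v \<in> expvecs r \<Longrightarrow> k *\<^sub>s v \<in> expvecs r"
  by (simp add: expvecs_def scale_apply)

text \<open>Coefficients at exponents of infinite support are forced to be \<open>0\<close>, so that every
  coefficient of a product is a finite sum.\<close>

typedef (overloaded) 'a mseries = "{f :: (nat \<Rightarrow> nat) \<Rightarrow> 'a::zero. \<forall>n. \<not> fin_supp n \<longrightarrow> f n = 0}"
  morphisms coeff Abs_mseries
  by (rule exI[of _ "\<lambda>_. 0"]) simp

setup_lifting type_definition_mseries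

lemma coeff_not_fin_supp: "\<not> fin_supp n \<Longrightarrow> coeff f n = 0"
  using coeff[of f] by auto

lemma mseries_eqI: "(\<And>n. coeff f n = coeff g n) \<Longrightarrow> f = g"
  by (metis coeff_inverse ext)

instantiation mseries :: (comm_ring_1) comm_ring_1
begin

lift_definition zero_mseries :: "'a mseries" is "\<lambda>n. 0" by simp
lift_definition one_mseries :: "'a mseries" is "\<lambda>n. if n = 0 then 1 else 0" by auto
lift_definition plus_mseries :: "'a mseries \<Rightarrow> 'a mseries \<Rightarrow> 'a mseries" is
  "\<lambda>f g n. f n + g n" by simp
lift_definition minus_mseries :: "'a mseries \<Rightarrow> 'a mseries \<Rightarrow> 'a mseries" is
  "\<lambda>f g n. f n - g n" by simp
lift_definition uminus_mseries :: "'a mseries \<Rightarrow> 'a mseries" is "\<lambda>f n. - f n" by simp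
lift_definition times_mseries :: "'a mseries \<Rightarrow> 'a mseries \<Rightarrow> 'a mseries" is
  "\<lambda>f g n. if fin_supp n then \<Sum>p\<in>{..n}. f p * g (n - p) else 0" by simp

lemma coeff_mult:
  "coeff (f * g) n = (if fin_supp n then \<Sum>p\<in>{..n}. coeff f p * coeff g (n - p) else 0)"
  by transfer simp

lemma mult_commute_mseries: "(f :: 'a mseries) * g = g * f"
proof (rule mseries_eqI)
  fix n
  have "(\<Sum>p\<in>{..n}. coeff f p * coeff g (n - p)) = (\<Sum>p\<in>{..n}. coeff g p * coeff f (n - p))"
    by (rule sum.reindex_bij_witness[where i="\<lambda>p. n - p" and j="\<lambda>p. n - p"])
       (auto simp: mult.commute)
  then show "coeff (f * g) n = coeff (g * f) n" by (simp add: coeff_mult)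
qed

lemma mult_assoc_mseries: "(f :: 'a mseries) * g * h = f * (g * h)"
proof (rule mseries_eqI)
  fix n
  show "coeff (f * g * h) n = coeff (f * (g * h)) n"
  proof (cases "fin_supp n")
    case True
    have fin: "finite {..m}" if "m \<le> n" for m
      by (rule finite_atMost_fin_supp[OF fin_supp_le[OF True that]])
    have "coeff (f * g * h) n = (\<Sum>p\<in>{..n}. coeff (f * g) p * coeff h (n - p))"
      using True by (simp add: coeff_mult)
    also have "\<dots> = (\<Sum>p\<in>{..n}. \<Sum>q\<in>{..p}. coeff f q * coeff g (p - q) * coeff h (n - p))"
      by (intro sum.cong refl) (simp add: coeff_mult sum_distrib_right fin_supp_le[OF True])
    also have "\<dots> = (\<Sum>(p, q)\<in>Sigma {..n} atMost. coeff f q * coeff g (p - q) * coeff h (n - p))"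
      using fin by (subst sum.Sigma) auto
    also have "\<dots> = (\<Sum>(q, t)\<in>Sigma {..n} (\<lambda>q. {..n - q}). coeff f q * (coeff g t * coeff h (n - q - t)))"
      by (rule sum.reindex_bij_witness[where i="\<lambda>(q, t). (q + t, q)" and j="\<lambda>(p, q). (q, p - q)"])
        (auto simp: mult.assoc fun_add_le_iff_le_diff intro: fun_diff_mono)
    also have "\<dots> = (\<Sum>q\<in>{..n}. \<Sum>t\<in>{..n - q}. coeff f q * (coeff g t * coeff h (n - q - t)))"
      by (rule sum.Sigma[symmetric]) (simp_all add: fin)
    also have "\<dots> = coeff (f * (g * h)) n"
      using True by (simp add: coeff_mult sum_distrib_left fin_supp_diff)
    finally show ?thesis .
  qed (simp add: coeff_mult)
qed

instance
proof
  fix a b c :: "'a mseries"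
  show "a * b * c = a * (b * c)" by (rule mult_assoc_mseries)
  show "a * b = b * a" by (rule mult_commute_mseries)
  show "1 * a = a"
  proof (rule mseries_eqI)
    fix n
    show "coeff (1 * a) n = coeff a n"
    proof (cases "fin_supp n")
      case True
      have "coeff (1 * a) n = (\<Sum>p\<in>{..n}. if p = 0 then coeff a n else 0)"
        using True by (simp add: coeff_mult one_mseries.rep_eq) (intro sum.cong; simp)
      also have "\<dots> = coeff a n"
        using finite_atMost_fin_supp[OF True] by simp
      finally show ?thesis .
    qed (simp add: coeff_mult coeff_not_fin_supp)
  qed
  show "(a + b) * c = a * c + b * c"
    by (rule mseries_eqI) (simp add: coeff_mult plus_mseries.rep_eq sum.distrib distrib_right)
  show "a + b + c = a + (b + c)" by transfer (simp add: add.assoc)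
  show "a + b = b + a" by transfer (simp add: add.commute)
  show "0 + a = a" by transfer simp
  show "- a + a = 0" by transfer simp
  show "a - b = a + - b" by transfer simp
  show "(0 :: 'a mseries) \<noteq> 1"
  proof
    assume "(0 :: 'a mseries) = 1"
    then have "coeff (0 :: 'a mseries) 0 = coeff 1 0" by simp
    then show False by (simp add: zero_mseries.rep_eq one_mseries.rep_eq)
  qed
qed

end

lemma coeff_0 [simp]: "coeff 0 n = 0"
  by transfer simp

lemma coeff_1: "coeff 1 n = (if n = 0 then 1 else 0)"
  by transfer simp

lemma coeff_add [simp]: "coeff (f + g) n = coeff f n + coeff g n"
  by transfer simp

lemma coeff_diff [simp]: "coeff (f - g) n = coeff f n - coeff g n"
  by transfer simp

lemma coeff_minus [simp]: "coeff (- f) n = - coeff f n"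
  by transfer simp

lemma coeff_sum: "coeff (sum f S) n = (\<Sum>x\<in>S. coeff (f x) n)"
  by (induction S rule: infinite_finite_induct) auto

lemma coeff_mult_nonzero:
  assumes "coeff (f * g) n \<noteq> 0"
  obtains p where "p \<le> n" "coeff f p \<noteq> 0" "coeff g (n - p) \<noteq> 0"
proof -
  have "fin_supp n" and "(\<Sum>p\<in>{..n}. coeff f p * coeff g (n - p)) \<noteq> 0"
    using assms by (auto simp: coeff_mult split: if_splits)
  then obtain p where "p \<in> {..n}" "coeff f p * coeff g (n - p) \<noteq> 0"
    by (meson sum.not_neutral_contains_not_neutral)
  then show thesis using that by fastforce
qed

lift_definition monom :: "'a::zero \<Rightarrow> (nat \<Rightarrow> nat) \<Rightarrow> 'a mseries" is
  "\<lambda>c v n. if fin_supp v \<and> n = v then c else 0" by auto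

lemma coeff_monom: "coeff (monom c v) n = (if fin_supp v \<and> n = v then c else 0)"
  by transfer simp

lemma coeff_monom_mult:
  "coeff (monom c v * f) n = (if fin_supp n \<and> v \<le> n then c * coeff f (n - v) else 0)"
proof (cases "fin_supp n")
  case True
  have "coeff (monom c v * f) n = (\<Sum>p\<in>{..n}. if p = v then c * coeff f (n - p) else 0)"
    using True by (auto simp: coeff_mult coeff_monom intro!: sum.cong dest: fin_supp_le[OF True])
  also have "\<dots> = (if v \<le> n then c * coeff f (n - v) else 0)"
    using finite_atMost_fin_supp[OF True] by simp
  finally show ?thesis using True by simp
qed (simp add: coeff_mult)

lemma monom_mult_monom: "monom a u * monom b w = monom (a * b) (u + w)"
proof (rule mseries_eqI)
  fix n
  have "u \<le> n \<and> n - u = w \<longleftrightarrow> n = u + w"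
    using fun_diff_eq_iff by auto
  then show "coeff (monom a u * monom b w) n = coeff (monom (a * b) (u + w)) n"
    by (auto simp: coeff_monom_mult coeff_monom fin_supp_diff dest: fin_supp_le)
qed

lemma monom_0_1 [simp]: "monom 1 0 = 1"
  by (rule mseries_eqI) (simp add: coeff_monom coeff_1)

lemma monom_power: "monom c v ^ k = monom (c ^ k) (k *\<^sub>s v)"
proof (induction k)
  case 0
  show "monom c v ^ 0 = monom (c ^ 0) (0 *\<^sub>s v)" by simp
next
  case (Suc k)
  then show ?case by (simp only: power_Suc monom_mult_monom scale_Suc)
qed

text \<open>\<open>geom c v\<close> is the expansion of \<open>1/(1 - c T\<^sup>v)\<close>; it is junk (\<open>0\<close>) if \<open>v = 0\<close> or \<open>v\<close> has
  infinite support.\<close>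

lift_definition geom :: "'a::comm_ring_1 \<Rightarrow> (nat \<Rightarrow> nat) \<Rightarrow> 'a mseries" is
  "\<lambda>c v n. if fin_supp v \<and> v \<noteq> 0 \<and> (\<exists>k. n = k *\<^sub>s v)
    then c ^ (THE k. n = k *\<^sub>s v) else 0"
  by (auto dest: fin_supp_scale)

lemma coeff_geom_scale:
  assumes "fin_supp v" "v \<noteq> 0" shows "coeff (geom c v) (k *\<^sub>s v) = c ^ k"
proof -
  have "(THE l. k *\<^sub>s v = l *\<^sub>s v) = k"
    using scale_eq_scale_iff[OF assms(2)] by simp
  then show ?thesis using assms by transfer auto
qed

lemma coeff_geom_eq_0: "(\<And>k. n \<noteq> k *\<^sub>s v) \<Longrightarrow> coeff (geom c v) n = 0"
  by transfer auto

lemma geom_unfold: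
  assumes "fin_supp v" "v \<noteq> 0" shows "geom c v = 1 + monom c v * geom c v"
proof (rule mseries_eqI)
  fix n
  show "coeff (geom c v) n = coeff (1 + monom c v * geom c v) n"
  proof (cases "\<exists>k. n = k *\<^sub>s v")
    case True
    then obtain k where k: "n = k *\<^sub>s v" by auto
    show ?thesis
    proof (cases k)
      case 0
      have "\<not> v \<le> 0" using assms(2) by (auto simp: le_fun_def fun_eq_iff)
      then show ?thesis using k 0 assms coeff_geom_scale[OF assms, of c 0]
        by (simp add: coeff_1 coeff_monom_mult)
    next
      case (Suc l)
      have n: "n = v + l *\<^sub>s v" using k Suc by (simp add: scale_Suc)
      then have "v \<le> n" "n - v = l *\<^sub>s v" "n \<noteq> 0"
        using assms(2) by (simp_all add: fun_diff_eq_iff)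
      then show ?thesis
        using k Suc assms fin_supp_scale[OF assms(1)]
        by (simp add: coeff_geom_scale coeff_1 coeff_monom_mult)
    qed
  next
    case False
    then have "n \<noteq> 0" by (metis scale_0)
    moreover have "n - v \<noteq> l *\<^sub>s v" if "v \<le> n" for l
    proof
      assume "n - v = l *\<^sub>s v"
      then have "n = Suc l *\<^sub>s v"
        using that by (simp add: fun_diff_eq_iff scale_Suc)
      then show False using False by blast
    qed
    ultimately show ?thesis using False
      by (auto simp: coeff_geom_eq_0 coeff_1 coeff_monom_mult)
  qed
qed

lemma geom_mult_one_minus:
  assumes "fin_supp v" "v \<noteq> 0" shows "geom c v * (1 - monom c v) = 1"
  using geom_unfold[OF assms, of c] by (simp add: algebra_simps)

definition geom_trunc :: "'a::comm_ring_1 \<Rightarrow> (nat \<Rightarrow> nat) \<Rightarrow> nat \<Rightarrow> 'a mseries" where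
  "geom_trunc c v K = (\<Sum>i<K. monom (c ^ i) (i *\<^sub>s v))"

lemma geom_trunc_mult_one_minus: "geom_trunc c v K * (1 - monom c v) = 1 - monom (c ^ K) (K *\<^sub>s v)"
  using one_diff_power_eq[of "monom c v" K] by (simp add: geom_trunc_def monom_power mult.commute)

lemma geom_eq_trunc_mult_geom:
  assumes "fin_supp v" "v \<noteq> 0" "q \<ge> 1"
  shows "geom c v = geom_trunc c v q * geom (c ^ q) (q *\<^sub>s v)"
proof -
  let ?X = "monom (c ^ q) (q *\<^sub>s v)"
  have "q *\<^sub>s v \<noteq> 0" using assms(2,3) by (auto simp: fun_eq_iff scale_apply)
  then have "geom (c ^ q) (q *\<^sub>s v) * (1 - ?X) = 1"
    using assms(1) by (intro geom_mult_one_minus fin_supp_scale)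
  then have "geom c v = geom c v * geom (c ^ q) (q *\<^sub>s v) * (1 - ?X)"
    by (simp add: mult.assoc)
  also have "\<dots> = (geom c v * (1 - monom c v)) * geom_trunc c v q * geom (c ^ q) (q *\<^sub>s v)"
    by (simp only: geom_trunc_mult_one_minus[symmetric]) (simp add: algebra_simps)
  finally show ?thesis using geom_mult_one_minus[OF assms(1,2), of c] by simp
qed

lemma geom_eq_trunc_plus_tail:
  assumes "fin_supp v" "v \<noteq> 0"
  shows "geom c v = geom_trunc c v K + monom (c ^ K) (K *\<^sub>s v) * geom c v"
proof -
  have "geom c v = geom c v * (geom_trunc c v K * (1 - monom c v) + monom (c ^ K) (K *\<^sub>s v))"
    by (simp add: geom_trunc_mult_one_minus)
  also have "\<dots> = geom_trunc c v K * (geom c v * (1 - monom c v)) + monom (c ^ K) (K *\<^sub>s v) * geom c v"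
    by (simp add: algebra_simps)
  finally show ?thesis using geom_mult_one_minus[OF assms, of c] by simp
qed

lemma mult_inverses_split:
  fixes gX gY gZ X Y :: "'a::comm_ring_1"
  assumes "gX * (1 - X) = 1" "gY * (1 - Y) = 1" "gZ * (1 - X * Y) = 1"
  shows "gX * gY = gZ * gX + Y * gZ * gY"
proof -
  have "gZ * gX + Y * gZ * gY = gZ * gX * (gY * (1 - Y)) + Y * gZ * gY * (gX * (1 - X))"
    using assms by simp
  also have "\<dots> = gX * gY * (gZ * (1 - X * Y))"
    by (simp add: algebra_simps)
  finally show ?thesis using assms(3) by simp
qed

definition supported :: "nat \<Rightarrow> 'a::zero mseries \<Rightarrow> bool" where
  "supported r A \<longleftrightarrow> (\<forall>n. coeff A n \<noteq> 0 \<longrightarrow> n \<in> expvecs r)"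

definition is_polynomial :: "'a::zero mseries \<Rightarrow> bool" where
  "is_polynomial A \<longleftrightarrow> finite {n. coeff A n \<noteq> 0}"

lemma supported_0 [simp]: "supported r 0"
  by (simp add: supported_def)

lemma supported_1 [simp]: "supported r 1"
  by (simp add: supported_def coeff_1)

lemma supported_monom: "u \<in> expvecs r \<Longrightarrow> supported r (monom c u)"
  by (simp add: supported_def coeff_monom)

lemma supported_add: "supported r A \<Longrightarrow> supported r B \<Longrightarrow> supported r (A + B)"
  unfolding supported_def by (metis add_0 coeff_add)

lemma supported_diff: "supported r A \<Longrightarrow> supported r B \<Longrightarrow> supported r (A - B)"
  unfolding supported_def by (metis diff_zero coeff_diff)

lemma supported_sum: "(\<And>x. x \<in> S \<Longrightarrow> supported r (f x)) \<Longrightarrow> supported r (sum f S)"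
  by (induction S rule: infinite_finite_induct) (auto intro: supported_add)

lemma supported_mult:
  assumes "supported r A" "supported r B" shows "supported r (A * B)"
  unfolding supported_def
proof (intro allI impI)
  fix n assume "coeff (A * B) n \<noteq> 0"
  then obtain p where "p \<le> n" "coeff A p \<noteq> 0" "coeff B (n - p) \<noteq> 0"
    by (rule coeff_mult_nonzero)
  then have "p + (n - p) \<in> expvecs r" using assms by (simp add: supported_def del: fun_add_diff_cancel)
  then show "n \<in> expvecs r" using \<open>p \<le> n\<close> by simp
qed

lemma is_polynomial_0 [simp]: "is_polynomial 0"
  by (simp add: is_polynomial_def)

lemma is_polynomial_1 [simp]: "is_polynomial 1"
  by (simp add: is_polynomial_def coeff_1)

lemma is_polynomial_monom: "is_polynomial (monom c u)"
  unfolding is_polynomial_def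
  by (rule finite_subset[of _ "{u}"]) (auto simp: coeff_monom split: if_splits)

lemma is_polynomial_add: "is_polynomial A \<Longrightarrow> is_polynomial B \<Longrightarrow> is_polynomial (A + B)"
  unfolding is_polynomial_def
  by (rule finite_subset[of _ "{n. coeff A n \<noteq> 0} \<union> {n. coeff B n \<noteq> 0}"]) auto

lemma is_polynomial_diff: "is_polynomial A \<Longrightarrow> is_polynomial B \<Longrightarrow> is_polynomial (A - B)"
  unfolding is_polynomial_def
  by (rule finite_subset[of _ "{n. coeff A n \<noteq> 0} \<union> {n. coeff B n \<noteq> 0}"]) auto

lemma is_polynomial_sum: "is_polynomial (sum f S)" if "\<And>x. x \<in> S \<Longrightarrow> is_polynomial (f x)"
  using that
  by (induction S rule: infinite_finite_induct) (simp_all add: is_polynomial_add)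

lemma is_polynomial_mult:
  assumes "is_polynomial A" "is_polynomial B" shows "is_polynomial (A * B)"
proof -
  let ?SA = "{n. coeff A n \<noteq> 0}" and ?SB = "{n. coeff B n \<noteq> 0}"
  have "{n. coeff (A * B) n \<noteq> 0} \<subseteq> (\<lambda>(p, q). p + q) ` (?SA \<times> ?SB)"
  proof
    fix n assume "n \<in> {n. coeff (A * B) n \<noteq> 0}"
    then obtain p where p: "p \<le> n" "coeff A p \<noteq> 0" "coeff B (n - p) \<noteq> 0"
      using coeff_mult_nonzero by blast
    then have "n = (\<lambda>(p, q). p + q) (p, n - p)" by simp
    then show "n \<in> (\<lambda>(p, q). p + q) ` (?SA \<times> ?SB)" using p by blast
  qed
  moreover have "finite ((\<lambda>(p, q). p + q) ` (?SA \<times> ?SB))"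
    using assms by (simp add: is_polynomial_def)
  ultimately show ?thesis unfolding is_polynomial_def by (rule finite_subset)
qed

lemma polynomial_eq_sum_monom:
  assumes "is_polynomial P" shows "P = (\<Sum>u\<in>{n. coeff P n \<noteq> 0}. monom (coeff P u) u)"
proof (rule mseries_eqI)
  fix n
  have "coeff (\<Sum>u\<in>{n. coeff P n \<noteq> 0}. monom (coeff P u) u) n =
      (\<Sum>u\<in>{n. coeff P n \<noteq> 0}. if u = n then coeff P n else 0)"
    unfolding coeff_sum by (rule sum.cong) (auto simp: coeff_monom coeff_not_fin_supp)
  also have "\<dots> = coeff P n"
    using assms by (simp add: is_polynomial_def)
  finally show "coeff P n = coeff (\<Sum>u\<in>{n. coeff P n \<noteq> 0}. monom (coeff P u) u) n" by simp
qed

lemma supported_geom_trunc: "v \<in> expvecs r \<Longrightarrow> supported r (geom_trunc c v K)"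
  unfolding geom_trunc_def by (intro supported_sum supported_monom scale_in_expvecs)

lemma is_polynomial_geom_trunc: "is_polynomial (geom_trunc c v K)"
  unfolding geom_trunc_def by (intro is_polynomial_sum is_polynomial_monom)

definition denoms :: "'a::comm_ring_1 \<Rightarrow> (int \<times> (nat \<Rightarrow> nat)) list \<Rightarrow> 'a mseries" where
  "denoms L ps = (\<Prod>(m, v)\<leftarrow>ps. 1 - monom (int_pow L m) v)"

definition geoms :: "'a::comm_ring_1 \<Rightarrow> (int \<times> (nat \<Rightarrow> nat)) list \<Rightarrow> 'a mseries" where
  "geoms L ps = (\<Prod>(m, v)\<leftarrow>ps. geom (int_pow L m) v)"

definition admissible :: "nat \<Rightarrow> (int \<times> (nat \<Rightarrow> nat)) list \<Rightarrow> bool" where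
  "admissible r ps \<longleftrightarrow> (\<forall>(m, v)\<in>set ps. m < 0 \<and> v \<in> expvecs r \<and> v \<noteq> 0)"

definition mintegrable :: "nat \<Rightarrow> 'a::comm_ring_1 \<Rightarrow> 'a mseries \<Rightarrow> bool" where
  "mintegrable r L A \<longleftrightarrow>
     (\<exists>P ps. supported r P \<and> is_polynomial P \<and> admissible r ps \<and> A * denoms L ps = P)"

lemma denoms_simps [simp]:
  "denoms L [] = 1"
  "denoms L ((m, v) # ps) = (1 - monom (int_pow L m) v) * denoms L ps"
  "denoms L (ps @ qs) = denoms L ps * denoms L qs"
  by (simp_all add: denoms_def)

lemma geoms_simps [simp]:
  "geoms L [] = 1"
  "geoms L ((m, v) # ps) = geom (int_pow L m) v * geoms L ps"
  "geoms L (ps @ qs) = geoms L ps * geoms L qs"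
  by (simp_all add: geoms_def)

lemma admissible_simps [simp]:
  "admissible r []"
  "admissible r ((m, v) # ps) \<longleftrightarrow> m < 0 \<and> v \<in> expvecs r \<and> v \<noteq> 0 \<and> admissible r ps"
  "admissible r (ps @ qs) \<longleftrightarrow> admissible r ps \<and> admissible r qs"
  by (auto simp: admissible_def)

lemma denoms_mult_geoms: "admissible r ps \<Longrightarrow> denoms L ps * geoms L ps = 1"
proof (induction ps)
  case (Cons mv ps)
  obtain m v where mv: "mv = (m, v)" by fastforce
  with Cons.prems have "fin_supp v" "v \<noteq> 0" "admissible r ps"
    by (auto intro: expvecs_fin_supp)
  have "denoms L (mv # ps) * geoms L (mv # ps) =
      geom (int_pow L m) v * (1 - monom (int_pow L m) v) * (denoms L ps * geoms L ps)"
    using mv by (simp add: algebra_simps)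
  also have "\<dots> = 1"
    using Cons.IH \<open>admissible r ps\<close> geom_mult_one_minus[OF \<open>fin_supp v\<close> \<open>v \<noteq> 0\<close>] by simp
  finally show ?case .
qed simp

lemma supported_denoms: "admissible r ps \<Longrightarrow> supported r (denoms L ps)"
  by (induction ps) (auto intro!: supported_mult supported_diff supported_monom)

lemma is_polynomial_denoms: "is_polynomial (denoms L ps)"
  by (induction ps) (auto intro!: is_polynomial_mult is_polynomial_diff is_polynomial_monom)

lemma mintegrable_polynomial: "supported r P \<Longrightarrow> is_polynomial P \<Longrightarrow> mintegrable r L P"
  unfolding mintegrable_def by (rule exI[of _ P], rule exI[of _ "[]"]) simp

lemma mintegrable_mult:
  assumes "mintegrable r L A" "mintegrable r L B" shows "mintegrable r L (A * B)"
proof -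
  obtain P ps where A: "supported r P" "is_polynomial P" "admissible r ps" "A * denoms L ps = P"
    using assms(1) by (auto simp: mintegrable_def)
  obtain Q qs where B: "supported r Q" "is_polynomial Q" "admissible r qs" "B * denoms L qs = Q"
    using assms(2) by (auto simp: mintegrable_def)
  have "A * B * denoms L (ps @ qs) = P * Q"
    using A(4) B(4) by (auto simp: algebra_simps)
  then show ?thesis unfolding mintegrable_def using A B
    by (intro exI[of _ "P * Q"] exI[of _ "ps @ qs"]) (simp add: supported_mult is_polynomial_mult)
qed

lemma mintegrable_add:
  assumes "mintegrable r L A" "mintegrable r L B" shows "mintegrable r L (A + B)"
proof -
  obtain P ps where A: "supported r P" "is_polynomial P" "admissible r ps" "A * denoms L ps = P"
    using assms(1) by (auto simp: mintegrable_def)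
  obtain Q qs where B: "supported r Q" "is_polynomial Q" "admissible r qs" "B * denoms L qs = Q"
    using assms(2) by (auto simp: mintegrable_def)
  have "(A + B) * denoms L (ps @ qs) = P * denoms L qs + Q * denoms L ps"
    using A(4) B(4) by (auto simp: algebra_simps)
  then show ?thesis unfolding mintegrable_def using A B
    by (intro exI[of _ "P * denoms L qs + Q * denoms L ps"] exI[of _ "ps @ qs"])
      (simp add: supported_add supported_mult supported_denoms
        is_polynomial_add is_polynomial_mult is_polynomial_denoms)
qed

lemma mintegrable_diff:
  assumes "mintegrable r L A" "mintegrable r L B" shows "mintegrable r L (A - B)"
proof -
  have "mintegrable r L (monom (- 1) 0)"
    by (intro mintegrable_polynomial supported_monom is_polynomial_monom) simp
  then have "mintegrable r L (monom (- 1) 0 * B)"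
    using assms(2) by (rule mintegrable_mult)
  moreover have "monom (- 1) 0 * B = - B"
    by (rule mseries_eqI) (simp add: coeff_monom_mult coeff_not_fin_supp)
  ultimately have "mintegrable r L (- B)" by simp
  then show ?thesis using mintegrable_add[OF assms(1), of "- B"] by simp
qed

lemma mintegrable_sum: "(\<And>x. x \<in> S \<Longrightarrow> mintegrable r L (f x)) \<Longrightarrow> mintegrable r L (sum f S)"
  by (induction S rule: infinite_finite_induct) (auto intro: mintegrable_add mintegrable_polynomial)

lemma mintegrable_geoms: "admissible r ps \<Longrightarrow> mintegrable r L (geoms L ps)"
proof (induction ps)
  case (Cons mv ps)
  obtain m v where mv: "mv = (m, v)" by fastforce
  with Cons.prems have "fin_supp v" "v \<noteq> 0" by (auto intro: expvecs_fin_supp)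
  then have "geom (int_pow L m) v * denoms L [(m, v)] = 1"
    by (simp add: geom_mult_one_minus)
  then have "mintegrable r L (geom (int_pow L m) v)"
    unfolding mintegrable_def using Cons.prems mv by (intro exI[of _ 1] exI[of _ "[(m, v)]"]) simp
  then show ?case using Cons mv by (simp add: mintegrable_mult)
qed (simp add: mintegrable_polynomial)

lemma int_pow_add:
  assumes "m1 < 0" "m2 < 0" shows "int_pow L m1 * int_pow L m2 = int_pow L (m1 + m2)"
proof -
  have "nat (- (m1 + m2)) = nat (- m1) + nat (- m2)" using assms by simp
  then show ?thesis using assms by (simp add: int_pow_def power_add)
qed

lemma int_pow_power:
  assumes "m < 0" shows "int_pow L m ^ q = int_pow L (int q * m)"
proof (cases "q = 0")
  case False
  have "nat (- (int q * m)) = nat (- m * int q)" by (simp add: algebra_simps)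
  also have "\<dots> = nat (- m) * nat (int q)" by (rule nat_mult_distrib) (use assms in simp)
  finally have "nat (- (int q * m)) = nat (- m) * q" by simp
  moreover have "int q * m < 0" using assms False by (simp add: mult_pos_neg)
  ultimately show ?thesis
    using assms by (simp add: int_pow_def power_mult)
qed (simp add: int_pow_def)

lift_definition mrestrict :: "(nat \<Rightarrow> nat) set \<Rightarrow> 'a::zero mseries \<Rightarrow> 'a mseries" is
  "\<lambda>D f n. if n \<in> D then f n else 0" by simp

lemma coeff_mrestrict: "coeff (mrestrict D f) n = (if n \<in> D then coeff f n else 0)"
  by transfer simp

lemma mrestrict_0 [simp]: "mrestrict D 0 = 0"
  by (rule mseries_eqI) (simp add: coeff_mrestrict)

lemma mrestrict_add: "mrestrict D (f + g) = mrestrict D f + mrestrict D g"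
  by (rule mseries_eqI) (simp add: coeff_mrestrict)

lemma mrestrict_sum: "mrestrict D (sum f S) = (\<Sum>x\<in>S. mrestrict D (f x))"
  by (induction S rule: infinite_finite_induct) (simp_all add: mrestrict_add)

lemma mrestrict_UNIV [simp]: "mrestrict UNIV f = f"
  by (rule mseries_eqI) (simp add: coeff_mrestrict)

lemma mrestrict_mrestrict: "mrestrict D (mrestrict E f) = mrestrict (D \<inter> E) f"
  by (rule mseries_eqI) (simp add: coeff_mrestrict)

lemma mrestrict_Compl: "mrestrict (- D) f = f - mrestrict D f"
  by (rule mseries_eqI) (simp add: coeff_mrestrict)

lemma supported_mrestrict: "supported r A \<Longrightarrow> supported r (mrestrict D A)"
  by (simp add: supported_def coeff_mrestrict)

definition halfspace :: "nat \<Rightarrow> nat \<Rightarrow> (nat \<Rightarrow> nat) set" where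
  "halfspace x y = {n. n x \<le> n y}"

definition gap :: "nat \<Rightarrow> nat \<Rightarrow> (nat \<Rightarrow> nat) \<Rightarrow> int" where
  "gap x y n = int (n y) - int (n x)"

lemma gap_add [simp]: "gap x y (u + w) = gap x y u + gap x y w"
  by (simp add: gap_def)

lemma gap_scale [simp]: "gap x y (k *\<^sub>s v) = int k * gap x y v"
  by (simp add: gap_def scale_apply algebra_simps)

lemma gap_0 [simp]: "gap x y 0 = 0"
  by (simp add: gap_def)

lemma gap_swap: "gap y x n = - gap x y n"
  by (simp add: gap_def)

lemma gap_diff:
  assumes "p \<le> n" shows "gap x y n = gap x y p + gap x y (n - p)"
proof -
  have "p x \<le> n x" "p y \<le> n y" using assms by (simp_all add: le_funD)
  then show ?thesis by (simp add: gap_def of_nat_diff)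
qed

lemma mem_halfspace_iff: "n \<in> halfspace x y \<longleftrightarrow> 0 \<le> gap x y n"
  by (simp add: halfspace_def gap_def)

definition gap_ge :: "nat \<Rightarrow> nat \<Rightarrow> int \<Rightarrow> 'a::zero mseries \<Rightarrow> bool" where
  "gap_ge x y t A \<longleftrightarrow> (\<forall>n. coeff A n \<noteq> 0 \<longrightarrow> t \<le> gap x y n)"

lemma gap_ge_mult:
  assumes "gap_ge x y s A" "gap_ge x y t B" shows "gap_ge x y (s + t) (A * B)"
  unfolding gap_ge_def
proof (intro allI impI)
  fix n assume "coeff (A * B) n \<noteq> 0"
  then obtain p where p: "p \<le> n" "coeff A p \<noteq> 0" "coeff B (n - p) \<noteq> 0"
    by (rule coeff_mult_nonzero)
  then have "s \<le> gap x y p" "t \<le> gap x y (n - p)"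
    using assms unfolding gap_ge_def by simp_all
  then show "s + t \<le> gap x y n" using gap_diff[OF p(1), of x y] by linarith
qed

lemma gap_ge_monom: "gap_ge x y (gap x y u) (monom c u)"
  by (simp add: gap_ge_def coeff_monom)

lemma gap_ge_geoms:
  assumes "\<forall>(m, v)\<in>set ps. 0 \<le> gap x y v" shows "gap_ge x y 0 (geoms L ps)"
  using assms
proof (induction ps)
  case Nil
  show ?case by (simp add: gap_ge_def coeff_1)
next
  case (Cons mv ps)
  obtain m v where mv: "mv = (m, v)" by fastforce
  have "gap_ge x y 0 (geom (int_pow L m) v)"
    unfolding gap_ge_def
  proof (intro allI impI)
    fix n assume "coeff (geom (int_pow L m) v) n \<noteq> 0"
    then obtain k where "n = k *\<^sub>s v" using coeff_geom_eq_0 by blast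
    then show "0 \<le> gap x y n" using Cons.prems mv by simp
  qed
  then show ?case using gap_ge_mult[of x y 0 _ 0] Cons mv by simp
qed

lemma mrestrict_halfspace_eq_self:
  assumes "gap_ge x y t A" "0 \<le> t" shows "mrestrict (halfspace x y) A = A"
proof (rule mseries_eqI)
  fix n
  show "coeff (mrestrict (halfspace x y) A) n = coeff A n"
  proof (cases "coeff A n = 0")
    case False
    then have "t \<le> gap x y n" using assms(1) by (simp add: gap_ge_def)
    then have "n \<in> halfspace x y" using assms(2) by (simp add: mem_halfspace_iff)
    then show ?thesis by (simp add: coeff_mrestrict)
  qed (simp add: coeff_mrestrict)
qed

lemma mrestrict_halfspace_eq_0:
  assumes "gap_ge y x t A" "0 < t" shows "mrestrict (halfspace x y) A = 0"
proof (rule mseries_eqI)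
  fix n
  show "coeff (mrestrict (halfspace x y) A) n = coeff 0 n"
  proof (cases "coeff A n = 0")
    case False
    then have "t \<le> gap y x n" using assms(1) by (simp add: gap_ge_def)
    then have "n \<notin> halfspace x y" using assms(2) by (simp add: mem_halfspace_iff gap_swap[of x y])
    then show ?thesis by (simp add: coeff_mrestrict)
  qed (simp add: coeff_mrestrict)
qed

definition unbalanced :: "nat \<Rightarrow> nat \<Rightarrow> (int \<times> (nat \<Rightarrow> nat)) list \<Rightarrow> nat" where
  "unbalanced x y ps = length (filter (\<lambda>(m, v). gap x y v \<noteq> 0) ps)"

lemma unbalanced_Cons [simp]:
  "unbalanced x y ((m, v) # ps) = (if gap x y v = 0 then 0 else 1) + unbalanced x y ps"
  by (simp add: unbalanced_def)

lemma unbalanced_remove1: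
  "(m, v) \<in> set ps \<Longrightarrow>
    unbalanced x y ps = (if gap x y v = 0 then 0 else 1) + unbalanced x y (remove1 (m, v) ps)"
proof (induction ps)
  case (Cons a ps)
  obtain m' v' where a: "a = (m', v')" by fastforce
  show ?case
  proof (cases "a = (m, v)")
    case False
    then have "(m, v) \<in> set ps" using Cons.prems by simp
    then show ?thesis using Cons.IH False a by simp
  qed simp
qed simp

lemma geoms_remove1:
  "(m, v) \<in> set ps \<Longrightarrow> geoms L ps = geom (int_pow L m) v * geoms L (remove1 (m, v) ps)"
proof (induction ps)
  case (Cons a ps)
  obtain m' v' where a: "a = (m', v')" by fastforce
  show ?case
  proof (cases "a = (m, v)")
    case False
    then have "(m, v) \<in> set ps" using Cons.prems by simp
    then show ?thesis using Cons.IH False a by (simp add: mult.left_commute)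
  qed simp
qed simp

lemma admissible_remove1:
  assumes "admissible r ps" shows "admissible r (remove1 a ps)"
  unfolding admissible_def
proof
  fix mv assume "mv \<in> set (remove1 a ps)"
  then have "mv \<in> set ps" by (rule subsetD[OF set_remove1_subset])
  then show "case mv of (m, v) \<Rightarrow> m < 0 \<and> v \<in> expvecs r \<and> v \<noteq> 0"
    using assms by (simp add: admissible_def)
qed

definition halfspace_integrable ::
    "nat \<Rightarrow> 'a::comm_ring_1 \<Rightarrow> nat \<Rightarrow> nat \<Rightarrow> (int \<times> (nat \<Rightarrow> nat)) list \<Rightarrow> bool" where
  "halfspace_integrable r L x y ps \<longleftrightarrow>
     (\<forall>c u. u \<in> expvecs r \<longrightarrow> mintegrable r L (mrestrict (halfspace x y) (monom c u * geoms L ps)))"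

lemma halfspace_integrable_polynomial_mult:
  assumes "halfspace_integrable r L x y ps" "supported r S" "is_polynomial S"
  shows "mintegrable r L (mrestrict (halfspace x y) (S * geoms L ps))"
proof -
  have eq: "S * geoms L ps = (\<Sum>u\<in>{n. coeff S n \<noteq> 0}. monom (coeff S u) u * geoms L ps)"
    by (subst polynomial_eq_sum_monom[OF assms(3)]) (simp add: sum_distrib_right)
  show ?thesis
    unfolding eq mrestrict_sum
  proof (rule mintegrable_sum)
    fix u assume "u \<in> {n. coeff S n \<noteq> 0}"
    then have "u \<in> expvecs r" using assms(2) by (simp add: supported_def)
    then show "mintegrable r L (mrestrict (halfspace x y) (monom (coeff S u) u * geoms L ps))"
      using assms(1) by (simp add: halfspace_integrable_def)
  qed
qed

lemma halfspace_integrable_reduce: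
  assumes IH: "\<And>qs. unbalanced x y qs < unbalanced x y ps \<Longrightarrow> admissible r qs \<Longrightarrow>
      halfspace_integrable r L x y qs"
    and adm: "admissible r ps" and mv: "(m, v) \<in> set ps" "gap x y v \<noteq> 0"
    and tail: "\<And>c u. u \<in> expvecs r \<Longrightarrow> \<exists>K. mintegrable r L
      (mrestrict (halfspace x y) (monom (c * int_pow L m ^ K) (u + K *\<^sub>s v) * geoms L ps))"
  shows "halfspace_integrable r L x y ps"
  unfolding halfspace_integrable_def
proof (intro allI impI)
  fix c u assume u: "u \<in> expvecs r"
  obtain K where K: "mintegrable r L
      (mrestrict (halfspace x y) (monom (c * int_pow L m ^ K) (u + K *\<^sub>s v) * geoms L ps))"
    using tail[OF u] by blast
  define rest where "rest = remove1 (m, v) ps"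
  define S where "S = geom_trunc (int_pow L m) v K"
  have v: "v \<in> expvecs r" "v \<noteq> 0" using adm mv(1) by (auto simp: admissible_def)
  have ps: "geoms L ps = geom (int_pow L m) v * geoms L rest"
    unfolding rest_def using mv(1) by (rule geoms_remove1)
  have tail: "geom (int_pow L m) v = S + monom (int_pow L m ^ K) (K *\<^sub>s v) * geom (int_pow L m) v"
    unfolding S_def using expvecs_fin_supp[OF v(1)] v(2) by (rule geom_eq_trunc_plus_tail)
  have "monom c u * geoms L ps =
      monom c u * (S + monom (int_pow L m ^ K) (K *\<^sub>s v) * geom (int_pow L m) v) * geoms L rest"
    unfolding ps by (simp only: tail[symmetric] mult.assoc)
  also have "\<dots> = (monom c u * S) * geoms L rest +
      (monom c u * monom (int_pow L m ^ K) (K *\<^sub>s v)) * (geom (int_pow L m) v * geoms L rest)"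
    by (simp add: algebra_simps)
  also have "\<dots> = (monom c u * S) * geoms L rest +
      monom (c * int_pow L m ^ K) (u + K *\<^sub>s v) * geoms L ps"
    unfolding ps monom_mult_monom ..
  finally have split: "monom c u * geoms L ps = \<dots>" .
  have "halfspace_integrable r L x y rest"
    using IH adm mv unfolding rest_def by (simp add: unbalanced_remove1[OF mv(1)] admissible_remove1)
  moreover have "supported r (monom c u * S)" "is_polynomial (monom c u * S)"
    unfolding S_def using u v(1)
    by (simp_all add: supported_mult supported_monom supported_geom_trunc
        is_polynomial_mult is_polynomial_monom is_polynomial_geom_trunc)
  ultimately have "mintegrable r L (mrestrict (halfspace x y) (monom c u * S * geoms L rest))"
    by (rule halfspace_integrable_polynomial_mult)
  then show "mintegrable r L (mrestrict (halfspace x y) (monom c u * geoms L ps))"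
    unfolding split mrestrict_add using K by (rule mintegrable_add)
qed

lemma mrestrict_halfspace_monom_geoms_eq_self:
  assumes "\<forall>(m, v)\<in>set ps. 0 \<le> gap x y v" "0 \<le> gap x y u"
  shows "mrestrict (halfspace x y) (monom c u * geoms L ps) = monom c u * geoms L ps"
proof -
  have "gap_ge x y (gap x y u + 0) (monom c u * geoms L ps)"
    by (rule gap_ge_mult[OF gap_ge_monom gap_ge_geoms[OF assms(1)]])
  then show ?thesis by (rule mrestrict_halfspace_eq_self) (use assms(2) in simp)
qed

lemma mrestrict_halfspace_monom_geoms_eq_0:
  assumes "\<forall>(m, v)\<in>set ps. gap x y v \<le> 0" "gap x y u < 0"
  shows "mrestrict (halfspace x y) (monom c u * geoms L ps) = 0"
proof -
  have "\<forall>(m, v)\<in>set ps. 0 \<le> gap y x v"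
    using assms(1) by (simp add: gap_swap[of x y])
  then have "gap_ge y x (gap y x u + 0) (monom c u * geoms L ps)"
    by (rule gap_ge_mult[OF gap_ge_monom gap_ge_geoms])
  then show ?thesis
    by (rule mrestrict_halfspace_eq_0) (use assms(2) in \<open>simp add: gap_swap[of x y]\<close>)
qed

lemma geom_mult_geom_split:
  fixes L :: "'a::comm_ring_1"
  assumes "m1 < 0" "m2 < 0" "fin_supp v1" "fin_supp v2" "v1 \<noteq> 0" "v2 \<noteq> 0" "1 \<le> p" "1 \<le> q"
  shows "geom (int_pow L m1) v1 * geom (int_pow L m2) v2 =
    geom_trunc (int_pow L m1) v1 q * geom_trunc (int_pow L m2) v2 p *
    (geoms L [(int q * m1 + int p * m2, q *\<^sub>s v1 + p *\<^sub>s v2), (int q * m1, q *\<^sub>s v1)] +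
     monom (int_pow L (int p * m2)) (p *\<^sub>s v2) *
     geoms L [(int q * m1 + int p * m2, q *\<^sub>s v1 + p *\<^sub>s v2), (int p * m2, p *\<^sub>s v2)])"
proof -
  define X where "X = monom (int_pow L (int q * m1)) (q *\<^sub>s v1)"
  define Y where "Y = monom (int_pow L (int p * m2)) (p *\<^sub>s v2)"
  define gX where "gX = geom (int_pow L (int q * m1)) (q *\<^sub>s v1)"
  define gY where "gY = geom (int_pow L (int p * m2)) (p *\<^sub>s v2)"
  define gZ where "gZ = geom (int_pow L (int q * m1 + int p * m2)) (q *\<^sub>s v1 + p *\<^sub>s v2)"
  have nz: "q *\<^sub>s v1 \<noteq> 0" "p *\<^sub>s v2 \<noteq> 0"
    using assms(5-8) by (auto simp: fun_eq_iff scale_apply)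
  have fs: "fin_supp (q *\<^sub>s v1)" "fin_supp (p *\<^sub>s v2)"
    using assms(3,4) by (simp_all add: fin_supp_scale)
  have "int q * m1 < 0" "int p * m2 < 0"
    using assms(1,2,7,8) by (simp_all add: mult_pos_neg)
  then have XY: "X * Y = monom (int_pow L (int q * m1 + int p * m2)) (q *\<^sub>s v1 + p *\<^sub>s v2)"
    by (simp add: X_def Y_def monom_mult_monom int_pow_add)
  have split: "gX * gY = gZ * gX + Y * gZ * gY"
  proof (rule mult_inverses_split)
    show "gX * (1 - X) = 1" unfolding gX_def X_def using fs nz by (simp add: geom_mult_one_minus)
    show "gY * (1 - Y) = 1" unfolding gY_def Y_def using fs nz by (simp add: geom_mult_one_minus)
    show "gZ * (1 - X * Y) = 1" unfolding gZ_def XY using fs nz by (simp add: geom_mult_one_minus)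
  qed
  have g1: "geom (int_pow L m1) v1 = geom_trunc (int_pow L m1) v1 q * gX"
    unfolding gX_def int_pow_power[OF assms(1), symmetric]
    by (rule geom_eq_trunc_mult_geom[OF assms(3,5,8)])
  have g2: "geom (int_pow L m2) v2 = geom_trunc (int_pow L m2) v2 p * gY"
    unfolding gY_def int_pow_power[OF assms(2), symmetric]
    by (rule geom_eq_trunc_mult_geom[OF assms(4,6,7)])
  have "geom (int_pow L m1) v1 * geom (int_pow L m2) v2 =
      geom_trunc (int_pow L m1) v1 q * geom_trunc (int_pow L m2) v2 p *
      (gX * gY)"
    unfolding g1 g2 by (simp only: ac_simps)
  also have "\<dots> = geom_trunc (int_pow L m1) v1 q *
      geom_trunc (int_pow L m2) v2 p * (gZ * gX + Y * gZ * gY)"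
    unfolding split ..
  finally show ?thesis
    by (simp add: gX_def gY_def gZ_def Y_def algebra_simps)
qed

lemma halfspace_integrable_decompose:
  assumes "geoms L ps = S1 * geoms L qs1 + S2 * geoms L qs2"
    and "supported r S1" "is_polynomial S1" "supported r S2" "is_polynomial S2"
    and "halfspace_integrable r L x y qs1" "halfspace_integrable r L x y qs2"
  shows "halfspace_integrable r L x y ps"
  unfolding halfspace_integrable_def
proof (intro allI impI)
  fix c u assume u: "u \<in> expvecs r"
  have "monom c u * geoms L ps = (monom c u * S1) * geoms L qs1 + (monom c u * S2) * geoms L qs2"
    unfolding assms(1) by (simp add: algebra_simps)
  then show "mintegrable r L (mrestrict (halfspace x y) (monom c u * geoms L ps))"
    using u assms(2-7)
    by (simp add: mrestrict_add mintegrable_add halfspace_integrable_polynomial_mult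
        supported_mult supported_monom is_polynomial_mult is_polynomial_monom)
qed

lemma halfspace_integrable_mixed_pair:
  assumes IH: "\<And>qs. unbalanced x y qs < unbalanced x y ((m1, v1) # (m2, v2) # rest) \<Longrightarrow>
      admissible r qs \<Longrightarrow> halfspace_integrable r L x y qs"
    and adm: "admissible r ((m1, v1) # (m2, v2) # rest)"
    and gaps: "0 < gap x y v1" "gap x y v2 < 0"
  shows "halfspace_integrable r L x y ((m1, v1) # (m2, v2) # rest)"
proof -
  define p where "p = nat (gap x y v1)"
  define q where "q = nat (- gap x y v2)"
  have p: "int p = gap x y v1" "1 \<le> p" and q: "int q = - gap x y v2" "1 \<le> q"
    using gaps by (simp_all add: p_def q_def)
  \<comment> \<open>\<open>Z\<close> is balanced, so both lists below have one unbalanced factor fewer.\<close>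
  define Z where "Z = (int q * m1 + int p * m2, q *\<^sub>s v1 + p *\<^sub>s v2)"
  define X where "X = (int q * m1, q *\<^sub>s v1)"
  define Y where "Y = (int p * m2, p *\<^sub>s v2)"
  define T where "T = geom_trunc (int_pow L m1) v1 q * geom_trunc (int_pow L m2) v2 p"
  have m1: "m1 < 0" "v1 \<in> expvecs r" "v1 \<noteq> 0" and m2: "m2 < 0" "v2 \<in> expvecs r" "v2 \<noteq> 0"
    and rest: "admissible r rest"
    using adm by simp_all
  have decomp: "geoms L ((m1, v1) # (m2, v2) # rest) = T * geoms L (Z # X # rest) +
      (T * monom (int_pow L (int p * m2)) (p *\<^sub>s v2)) * geoms L (Z # Y # rest)"
    using geom_mult_geom_split[OF m1(1) m2(1) expvecs_fin_supp[OF m1(2)] expvecs_fin_supp[OF m2(2)]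
        m1(3) m2(3) p(2) q(2), of L]
    by (simp add: T_def X_def Y_def Z_def algebra_simps)
  have neg: "int q * m1 < 0" "int p * m2 < 0"
    using m1(1) m2(1) p(2) q(2) by (simp_all add: mult_pos_neg)
  have nz: "q *\<^sub>s v1 \<noteq> 0" "p *\<^sub>s v2 \<noteq> 0"
    using m1(3) m2(3) p(2) q(2) by (auto simp: fun_eq_iff scale_apply)
  have "gap x y (snd Z) = 0" "gap x y (snd X) \<noteq> 0" "gap x y (snd Y) \<noteq> 0"
    using p q by (simp_all add: X_def Y_def Z_def)
  then have "unbalanced x y (Z # X # rest) < unbalanced x y ((m1, v1) # (m2, v2) # rest)"
    "unbalanced x y (Z # Y # rest) < unbalanced x y ((m1, v1) # (m2, v2) # rest)"
    using gaps by (simp_all add: X_def Y_def Z_def)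
  moreover have "admissible r (Z # X # rest)" "admissible r (Z # Y # rest)"
    using rest neg nz m1(2) m2(2) by (simp_all add: X_def Y_def Z_def scale_in_expvecs)
  ultimately have IHX: "halfspace_integrable r L x y (Z # X # rest)"
    and IHY: "halfspace_integrable r L x y (Z # Y # rest)"
    by (simp_all add: IH)
  have T: "supported r T" "is_polynomial T"
    unfolding T_def using m1(2) m2(2)
    by (simp_all add: supported_mult supported_geom_trunc is_polynomial_mult is_polynomial_geom_trunc)
  show ?thesis
  proof (rule halfspace_integrable_decompose[OF decomp T _ _ IHX IHY])
    show "supported r (T * monom (int_pow L (int p * m2)) (p *\<^sub>s v2))"
      "is_polynomial (T * monom (int_pow L (int p * m2)) (p *\<^sub>s v2))"
      using T m2(2) by (simp_all add: supported_mult supported_monom scale_in_expvecs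
          is_polynomial_mult is_polynomial_monom)
  qed
qed

lemma halfspace_integrable_mixed:
  assumes IH: "\<And>qs. unbalanced x y qs < unbalanced x y ps \<Longrightarrow> admissible r qs \<Longrightarrow>
      halfspace_integrable r L x y qs"
    and adm: "admissible r ps"
    and mv1: "(m1, v1) \<in> set ps" "0 < gap x y v1"
    and mv2: "(m2, v2) \<in> set ps" "gap x y v2 < 0"
  shows "halfspace_integrable r L x y ps"
proof -
  define rest where "rest = remove1 (m2, v2) (remove1 (m1, v1) ps)"
  define qs where "qs = (m1, v1) # (m2, v2) # rest"
  have "(m2, v2) \<noteq> (m1, v1)" using mv1(2) mv2(2) by auto
  then have mv2': "(m2, v2) \<in> set (remove1 (m1, v1) ps)"
    using mv2(1) by (simp add: in_set_remove1)
  have geoms: "geoms L ps = geoms L qs"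
    using geoms_remove1[OF mv1(1), of L] geoms_remove1[OF mv2', of L]
    by (simp add: qs_def rest_def mult.assoc)
  have "unbalanced x y qs = unbalanced x y ps"
    using unbalanced_remove1[OF mv1(1), of x y] unbalanced_remove1[OF mv2', of x y]
    by (simp add: qs_def rest_def)
  moreover have "admissible r qs"
    using adm mv1(1) mv2(1) admissible_remove1[OF admissible_remove1[OF adm]]
    by (auto simp: qs_def rest_def admissible_def)
  ultimately have "halfspace_integrable r L x y qs"
    unfolding qs_def using mv1(2) mv2(2) IH by (intro halfspace_integrable_mixed_pair) simp_all
  then show ?thesis
    using geoms by (simp add: halfspace_integrable_def)
qed

lemma mintegrable_monom_mult_geoms:
  "u \<in> expvecs r \<Longrightarrow> admissible r ps \<Longrightarrow> mintegrable r L (monom c u * geoms L ps)"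
  by (intro mintegrable_mult mintegrable_polynomial mintegrable_geoms supported_monom is_polynomial_monom)

lemma halfspace_integrable_nonneg:
  assumes IH: "\<And>qs. unbalanced x y qs < unbalanced x y ps \<Longrightarrow> admissible r qs \<Longrightarrow>
      halfspace_integrable r L x y qs"
    and adm: "admissible r ps"
    and mv: "(m, v) \<in> set ps" "0 < gap x y v" and nonneg: "\<forall>(m, v)\<in>set ps. 0 \<le> gap x y v"
  shows "halfspace_integrable r L x y ps"
proof (rule halfspace_integrable_reduce[OF IH adm mv(1)])
  show "gap x y v \<noteq> 0" using mv(2) by simp
  fix c u assume u: "u \<in> expvecs r"
  define K where "K = nat (- gap x y u)"
  have "int K * 1 \<le> int K * gap x y v" using mv(2) by (intro mult_left_mono) simp_all
  moreover have "- gap x y u \<le> int K" by (simp add: K_def)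
  ultimately have "0 \<le> gap x y (u + K *\<^sub>s v)" by simp
  then have "mrestrict (halfspace x y) (monom (c * int_pow L m ^ K) (u + K *\<^sub>s v) * geoms L ps) =
      monom (c * int_pow L m ^ K) (u + K *\<^sub>s v) * geoms L ps"
    using nonneg by (rule mrestrict_halfspace_monom_geoms_eq_self[rotated])
  moreover have "u + K *\<^sub>s v \<in> expvecs r"
    using u adm mv(1) by (auto simp: admissible_def scale_in_expvecs)
  ultimately show "\<exists>K. mintegrable r L
      (mrestrict (halfspace x y) (monom (c * int_pow L m ^ K) (u + K *\<^sub>s v) * geoms L ps))"
    using adm by (metis mintegrable_monom_mult_geoms)
qed

lemma halfspace_integrable_nonpos:
  assumes IH: "\<And>qs. unbalanced x y qs < unbalanced x y ps \<Longrightarrow> admissible r qs \<Longrightarrow>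
      halfspace_integrable r L x y qs"
    and adm: "admissible r ps"
    and mv: "(m, v) \<in> set ps" "gap x y v < 0" and nonpos: "\<forall>(m, v)\<in>set ps. gap x y v \<le> 0"
  shows "halfspace_integrable r L x y ps"
proof (rule halfspace_integrable_reduce[OF IH adm mv(1)])
  show "gap x y v \<noteq> 0" using mv(2) by simp
  fix c u assume u: "u \<in> expvecs r"
  define K where "K = nat (gap x y u) + 1"
  have "int K * gap x y v \<le> int K * - 1" using mv(2) by (intro mult_left_mono) simp_all
  moreover have "gap x y u < int K" by (simp add: K_def)
  ultimately have "gap x y (u + K *\<^sub>s v) < 0" by simp
  with nonpos have "mrestrict (halfspace x y) (monom (c * int_pow L m ^ K) (u + K *\<^sub>s v) * geoms L ps) = 0"
    by (rule mrestrict_halfspace_monom_geoms_eq_0)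
  then show "\<exists>K. mintegrable r L
      (mrestrict (halfspace x y) (monom (c * int_pow L m ^ K) (u + K *\<^sub>s v) * geoms L ps))"
    by (metis mintegrable_polynomial supported_0 is_polynomial_0)
qed

lemma halfspace_integrable_balanced:
  assumes adm: "admissible r ps" and balanced: "\<forall>(m, v)\<in>set ps. gap x y v = 0"
  shows "halfspace_integrable r L x y ps"
  unfolding halfspace_integrable_def
proof (intro allI impI)
  fix c u assume u: "u \<in> expvecs r"
  have nonneg: "\<forall>(m, v)\<in>set ps. 0 \<le> gap x y v" and nonpos: "\<forall>(m, v)\<in>set ps. gap x y v \<le> 0"
    using balanced by auto
  show "mintegrable r L (mrestrict (halfspace x y) (monom c u * geoms L ps))"
  proof (cases "0 \<le> gap x y u")
    case True
    then show ?thesis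
      using mrestrict_halfspace_monom_geoms_eq_self[OF nonneg True, where c=c and L=L]
        mintegrable_monom_mult_geoms[OF u adm, where c=c and L=L]
      by simp
  next
    case False
    then have "gap x y u < 0" by simp
    then show ?thesis
      using mrestrict_halfspace_monom_geoms_eq_0[OF nonpos, where c=c and L=L]
      by (simp add: mintegrable_polynomial)
  qed
qed

lemma halfspace_integrable_admissible: "admissible r ps \<Longrightarrow> halfspace_integrable r L x y ps"
proof (induction ps rule: measure_induct_rule[where f = "unbalanced x y"])
  case (less ps)
  show ?case
  proof (cases "\<exists>(m, v)\<in>set ps. 0 < gap x y v")
    case pos: True
    then obtain m1 v1 where mv1: "(m1, v1) \<in> set ps" "0 < gap x y v1" by auto
    show ?thesis
    proof (cases "\<exists>(m, v)\<in>set ps. gap x y v < 0")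
      case True
      then obtain m2 v2 where "(m2, v2) \<in> set ps" "gap x y v2 < 0" by auto
      with less.IH less.prems mv1 show ?thesis by (rule halfspace_integrable_mixed)
    next
      case False
      then have "\<forall>(m, v)\<in>set ps. 0 \<le> gap x y v" by auto
      with less.IH less.prems mv1 show ?thesis by (rule halfspace_integrable_nonneg)
    qed
  next
    case False
    then have nonpos: "\<forall>(m, v)\<in>set ps. gap x y v \<le> 0" by auto
    show ?thesis
    proof (cases "\<exists>(m, v)\<in>set ps. gap x y v < 0")
      case True
      then obtain m v where "(m, v) \<in> set ps" "gap x y v < 0" by auto
      with less.IH less.prems show ?thesis using nonpos by (rule halfspace_integrable_nonpos)
    next
      case False
      have "\<forall>(m, v)\<in>set ps. gap x y v = 0"
      proof
        fix mv assume "mv \<in> set ps"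
        moreover obtain m v where mv: "mv = (m, v)" by fastforce
        ultimately have "\<not> gap x y v < 0" "gap x y v \<le> 0" using False nonpos by auto
        then show "case mv of (m, v) \<Rightarrow> gap x y v = 0" using mv by simp
      qed
      with less.prems show ?thesis by (rule halfspace_integrable_balanced)
    qed
  qed
qed

lemma mintegrable_mrestrict_halfspace:
  assumes "supported r A" "mintegrable r L A"
  shows "mintegrable r L (mrestrict (halfspace x y) A)"
proof -
  obtain P ps where P: "supported r P" "is_polynomial P" "admissible r ps" "A * denoms L ps = P"
    using assms(2) by (auto simp: mintegrable_def)
  have "A = A * (denoms L ps * geoms L ps)" using denoms_mult_geoms[OF P(3), of L] by simp
  also have "\<dots> = P * geoms L ps" using P(4) by (simp add: mult.assoc[symmetric])
  finally show ?thesis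
    using halfspace_integrable_polynomial_mult[OF halfspace_integrable_admissible[OF P(3)] P(1,2)]
    by simp
qed

definition restriction_closed :: "nat \<Rightarrow> 'a::comm_ring_1 \<Rightarrow> (nat \<Rightarrow> nat) set \<Rightarrow> bool" where
  "restriction_closed r L D \<longleftrightarrow>
     (\<forall>A. supported r A \<longrightarrow> mintegrable r L A \<longrightarrow> mintegrable r L (mrestrict D A))"

lemma restriction_closed_Int:
  "restriction_closed r L D \<Longrightarrow> restriction_closed r L E \<Longrightarrow> restriction_closed r L (D \<inter> E)"
  unfolding restriction_closed_def by (metis mrestrict_mrestrict supported_mrestrict)

lemma restriction_closed_Compl: "restriction_closed r L D \<Longrightarrow> restriction_closed r L (- D)"
  unfolding restriction_closed_def by (simp add: mrestrict_Compl mintegrable_diff)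

lemma restriction_closed_Ball:
  assumes "finite J" "\<And>j. j \<in> J \<Longrightarrow> restriction_closed r L {n. P j n}"
  shows "restriction_closed r L {n. \<forall>j\<in>J. P j n}"
  using assms
proof (induction J rule: finite_induct)
  case empty
  show ?case by (simp add: restriction_closed_def)
next
  case (insert j J)
  have "{n. \<forall>j'\<in>insert j J. P j' n} = {n. P j n} \<inter> {n. \<forall>j'\<in>J. P j' n}" by auto
  then show ?case using insert by (simp add: restriction_closed_Int)
qed

lemma restriction_closed_le: "restriction_closed r L {n. n a \<le> n b}"
  using mintegrable_mrestrict_halfspace[of r _ L a b]
  by (simp add: restriction_closed_def halfspace_def)

lemma restriction_closed_eq: "restriction_closed r L {n. n a = n b}"
proof -
  have "{n :: nat \<Rightarrow> nat. n a = n b} = {n. n a \<le> n b} \<inter> {n. n b \<le> n a}" by auto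
  then show ?thesis by (simp add: restriction_closed_Int restriction_closed_le)
qed

lemma restriction_closed_less: "restriction_closed r L {n. n a < n b}"
proof -
  have "{n :: nat \<Rightarrow> nat. n a < n b} = - {n. n b \<le> n a}" by auto
  then show ?thesis by (simp add: restriction_closed_Compl restriction_closed_le)
qed

lemma restriction_closed_cong:
  assumes "restriction_closed r L D" "\<And>n. n \<in> expvecs r \<Longrightarrow> n \<in> D \<longleftrightarrow> n \<in> E"
  shows "restriction_closed r L E"
  unfolding restriction_closed_def
proof (intro allI impI)
  fix A :: "'a mseries" assume A: "supported r A" "mintegrable r L A"
  have "mrestrict E A = mrestrict D A"
  proof (rule mseries_eqI)
    fix n
    show "coeff (mrestrict E A) n = coeff (mrestrict D A) n"
      using A(1) assms(2)[of n] by (cases "coeff A n = 0") (auto simp: coeff_mrestrict supported_def)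
  qed
  then show "mintegrable r L (mrestrict E A)" using assms(1) A by (simp add: restriction_closed_def)
qed

lemma restriction_closed_basic_cell_comp:
  assumes "\<sigma> permutes {..<r}"
  shows "restriction_closed r L {n. n \<circ> \<sigma> \<in> basic_cell r rs}"
proof -
  define F1 where "F1 = {(j, i). 1 \<le> j \<and> j < length rs \<and> rs ! (j - 1) < i \<and> i \<le> rs ! j}"
  define F2 where "F2 = {j. 2 \<le> j \<and> j < length rs}"
  define E :: "(nat \<Rightarrow> nat) set"
    where "E = {n. \<forall>(j, i)\<in>F1. n (\<sigma> (i - 1)) = n (\<sigma> (rs ! j - 1))} \<inter>
      {n. \<forall>j\<in>F2. n (\<sigma> (rs ! (j - 1) - 1)) < n (\<sigma> (rs ! j - 1))}"
  have "F1 \<subseteq> {..<length rs} \<times> {..Max (set rs)}"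
  proof
    fix z assume "z \<in> F1"
    then obtain j i where z: "z = (j, i)" "j < length rs" "i \<le> rs ! j" by (auto simp: F1_def)
    have "rs ! j \<le> Max (set rs)" using z(2) by (intro Max_ge) auto
    then show "z \<in> {..<length rs} \<times> {..Max (set rs)}" using z by (auto intro: order.trans)
  qed
  then have "finite F1" by (rule finite_subset) simp
  moreover have "finite F2" by (simp add: F2_def)
  ultimately have E: "restriction_closed r L E"
    unfolding E_def
    by (intro restriction_closed_Int restriction_closed_Ball)
      (auto simp: restriction_closed_eq restriction_closed_less split: prod.splits)
  show ?thesis
  proof (rule restriction_closed_cong[OF E])
    fix n assume "n \<in> expvecs r"
    then have "n \<circ> \<sigma> \<in> expvecs r"
      using permutes_not_in[OF assms] by (auto simp: expvecs_def)
    then show "n \<in> E \<longleftrightarrow> n \<in> {n. n \<circ> \<sigma> \<in> basic_cell r rs}"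
      unfolding basic_cell_def E_def F1_def F2_def by auto
  qed
qed

lemma restriction_closed_ordered_cell:
  assumes "ordered_cell r D" shows "restriction_closed r L D"
proof -
  obtain \<rho> rs where \<rho>: "\<rho> permutes {..<r}" and D: "D = (\<lambda>n. n \<circ> \<rho>) ` basic_cell r rs"
    using assms by (auto simp: ordered_cell_def)
  have "D = {n. n \<circ> inv \<rho> \<in> basic_cell r rs}"
  proof (intro set_eqI iffI)
    fix n assume "n \<in> D"
    then obtain n' where "n' \<in> basic_cell r rs" "n = n' \<circ> \<rho>" using D by auto
    moreover have "n' \<circ> \<rho> \<circ> inv \<rho> = n'"
      using permutes_inverses(1)[OF \<rho>] by (auto simp: fun_eq_iff)
    ultimately show "n \<in> {n. n \<circ> inv \<rho> \<in> basic_cell r rs}" by simp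
  next
    fix n assume "n \<in> {n. n \<circ> inv \<rho> \<in> basic_cell r rs}"
    moreover have "n = n \<circ> inv \<rho> \<circ> \<rho>"
      using permutes_inverses(2)[OF \<rho>] by (auto simp: fun_eq_iff)
    ultimately show "n \<in> D" unfolding D by blast
  qed
  then show ?thesis
    using restriction_closed_basic_cell_comp[OF permutes_inv[OF \<rho>]] by simp
qed

lift_definition of_series :: "((nat \<Rightarrow> nat) \<Rightarrow> 'a::zero) \<Rightarrow> 'a mseries" is
  "\<lambda>a n. if fin_supp n then a n else 0" by simp

lemma coeff_of_series:
  assumes "is_series r a" shows "coeff (of_series a) = a"
proof
  fix n
  have "a n = 0" if "\<not> fin_supp n"
    using assms that expvecs_fin_supp by (auto simp: is_series_def)
  then show "coeff (of_series a) n = a n" by (simp add: of_series.rep_eq)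
qed

lemma of_series_coeff: "of_series (coeff A) = A"
  by (rule mseries_eqI) (simp add: of_series.rep_eq coeff_not_fin_supp)

lemma supported_iff_is_series: "supported r A \<longleftrightarrow> is_series r (coeff A)"
  by (auto simp: supported_def is_series_def)

lemma lambda_zero_eq_zero: "(\<lambda>_. 0) = (0 :: nat \<Rightarrow> nat)"
  by (simp add: zero_fun_def)

lemma ps_times_eq_coeff_mult:
  assumes "is_series r a" "is_series r b"
  shows "ps_times r a b = coeff (of_series a * of_series b)"
proof
  fix n
  show "ps_times r a b n = coeff (of_series a * of_series b) n"
  proof (cases "n \<in> expvecs r")
    case True
    have "{p \<in> expvecs r. \<forall>i. p i \<le> n i} = {..n}"
    proof (intro set_eqI iffI)
      fix p assume "p \<in> {..n}"
      then have le: "p \<le> n" by simp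
      have "p i = 0" if "r \<le> i" for i
        using le_funD[OF le, of i] True that by (simp add: expvecs_def)
      then show "p \<in> {p \<in> expvecs r. \<forall>i. p i \<le> n i}" using le by (simp add: expvecs_def le_funD)
    qed (simp add: le_fun_def)
    then show ?thesis
      using True expvecs_fin_supp[OF True]
      by (simp add: ps_times_def coeff_mult coeff_of_series[OF assms(1)] coeff_of_series[OF assms(2)]
          fun_diff_def)
  next
    case False
    have "supported r (of_series a * of_series b)"
      using assms by (intro supported_mult) (simp_all add: supported_iff_is_series coeff_of_series)
    then show ?thesis using False by (auto simp: ps_times_def supported_def)
  qed
qed

lemma is_series_denom_factor: "v \<in> expvecs r \<Longrightarrow> is_series r (denom_factor L m v)"
  by (auto simp: is_series_def denom_factor_def ps_one_def lambda_zero_eq_zero)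

lemma of_series_denom_factor:
  assumes "v \<in> expvecs r" shows "of_series (denom_factor L m v) = 1 - monom (int_pow L m) v"
  using expvecs_fin_supp[OF assms]
  by (intro mseries_eqI)
    (auto simp: of_series.rep_eq denom_factor_def ps_one_def coeff_1 coeff_monom lambda_zero_eq_zero)

lemma denom_prod_eq_coeff_denoms: "admissible r ps \<Longrightarrow> denom_prod r L ps = coeff (denoms L ps)"
proof (induction ps)
  case Nil
  show ?case by (simp add: denom_prod_def fun_eq_iff coeff_1 ps_one_def lambda_zero_eq_zero)
next
  case (Cons mv ps)
  obtain m v where mv: "mv = (m, v)" by fastforce
  with Cons.prems have v: "v \<in> expvecs r" and ps: "admissible r ps" by auto
  have "denom_prod r L (mv # ps) = ps_times r (denom_factor L m v) (coeff (denoms L ps))"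
    using Cons.IH ps by (simp add: denom_prod_def mv)
  also have "\<dots> = coeff (of_series (denom_factor L m v) * of_series (coeff (denoms L ps)))"
    using v ps supported_denoms[OF ps, of L]
    by (intro ps_times_eq_coeff_mult) (simp_all add: is_series_denom_factor supported_iff_is_series)
  also have "\<dots> = coeff (denoms L (mv # ps))"
    using v by (simp add: of_series_coeff of_series_denom_factor mv)
  finally show ?case .
qed

lemma integrable_iff_mintegrable:
  assumes "is_series r a" shows "integrable r L a \<longleftrightarrow> mintegrable r L (of_series a)"
proof -
  have eq: "ps_times r a (denom_prod r L ps) = coeff (of_series a * denoms L ps)"
    if "admissible r ps" for ps
    using ps_times_eq_coeff_mult[OF assms, of "denom_prod r L ps"] supported_denoms[OF that, of L]
    by (simp add: denom_prod_eq_coeff_denoms[OF that] of_series_coeff supported_iff_is_series)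
  have adm: "admissible r ps \<longleftrightarrow> (\<forall>(m, v)\<in>set ps. m < 0 \<and> v \<in> expvecs r \<and> v \<noteq> (\<lambda>_. 0))" for ps
    by (simp add: admissible_def lambda_zero_eq_zero)
  show ?thesis
  proof
    assume "integrable r L a"
    then obtain P ps where P: "is_series r P" "finite {n. P n \<noteq> 0}" "admissible r ps"
      "ps_times r a (denom_prod r L ps) = P"
      unfolding integrable_def adm by blast
    then have "of_series a * denoms L ps = of_series P"
      using eq[OF P(3)] by (metis of_series_coeff)
    then show "mintegrable r L (of_series a)"
      unfolding mintegrable_def using P
      by (intro exI[of _ "of_series P"] exI[of _ ps])
        (simp add: supported_iff_is_series is_polynomial_def coeff_of_series)
  next
    assume "mintegrable r L (of_series a)"
    then obtain P ps where P: "supported r P" "is_polynomial P" "admissible r ps"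
      "of_series a * denoms L ps = P"
      by (auto simp: mintegrable_def)
    then have "ps_times r a (denom_prod r L ps) = coeff P" using eq by simp
    then show "integrable r L a"
      unfolding integrable_def adm[symmetric] using P
      by (intro exI[of _ "coeff P"] exI[of _ ps]) (simp add: supported_iff_is_series is_polynomial_def)
  qed
qed

lemma is_series_restrict_series: "is_series r a \<Longrightarrow> is_series r (restrict_series D a)"
  by (simp add: is_series_def restrict_series_def)

lemma of_series_restrict_series: "of_series (restrict_series D a) = mrestrict D (of_series a)"
  by (rule mseries_eqI) (simp add: of_series.rep_eq coeff_mrestrict restrict_series_def)

theorem lemma5p6:
  fixes L :: "'a::comm_ring_1" and r :: nat and a :: "(nat \<Rightarrow> nat) \<Rightarrow> 'a" and D :: "(nat \<Rightarrow> nat) set"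
  assumes "L dvd 1"
    and "\<forall>n::nat. n \<ge> 1 \<longrightarrow> (1 - L ^ n) dvd 1"
    and "is_series r a"
    and "integrable r L a"
    and "ordered_cell r D"
  shows "integrable r L (restrict_series D a)"
proof -
  have "restriction_closed r L D"
    using assms(5) by (rule restriction_closed_ordered_cell)
  moreover have "supported r (of_series a)" "mintegrable r L (of_series a)"
    using assms(3,4) by (simp_all add: supported_iff_is_series coeff_of_series integrable_iff_mintegrable)
  ultimately have "mintegrable r L (mrestrict D (of_series a))"
    by (simp add: restriction_closed_def)
  then show ?thesis
    using assms(3) by (simp add: integrable_iff_mintegrable is_series_restrict_series of_series_restrict_series)
qed

end
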